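(* Let $(L,\vee,\wedge,0,1)$ be a complemented lattice with $0\ne1$ and $a,b,c\in L$. Then: (i) $a\to0=a^+$ and $1\to a=\{a\}$; (ii) if $a\le b$ then $a\to b=\{1\}$; (iii) $a\to b=\{1\}$ if and only if $a\wedge b\in a^{++}$; (iv) if $b\in a^+$ then $a\to b=a^+$; (v) if $b\le c$ then $a\to b\le_i a\to c$ for $i=1,2$; (vi) if $a\to b=a\to c=\{1\}$ and $a^{++}$ is closed under $\wedge$, then $a\to(b\wedge c)=\{1\}$; (vii) if $a^{++}\subseteq b^{++}$ and $a\to b=\{1\}$, then $b\to a=\{1\}$.
   Context: For $a\in L$, $a^+:=\{x\in L\mid a\vee x=1,\ a\wedge x=0\}$ (the set of all complements of $a$); for $A\subseteq L$, $A^+:=\{x\in L\mid a\vee x=1\text{ and }a\wedge x=0\text{ for all }a\in A\}$, and $a^{++}:=(a^+)^+$. For $A,B\subseteq L$: $A\vee B:=\{x\vee y\mid x\in A,y\in B\}$; $A\le_1B$ means for every $x\in A$ there is $y\in B$ with $x\le y$; $A\le_2B$ means for every $y\in B$ there is $x\in A$ with $x\le y$. For $a,b\in L$, $a\to b:=a^+\vee\{a\wedge b\}=\{x\vee(a\wedge b)\mid x\in a^+\}$. *)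

theory Defs
  imports Main
begin

definition cmpl :: "'a::bounded_lattice \<Rightarrow> 'a set" where
  "cmpl a = {x. sup a x = top \<and> inf a x = bot}"

definition cmplS :: "'a::bounded_lattice set \<Rightarrow> 'a set" where
  "cmplS A = {x. \<forall>a\<in>A. sup a x = top \<and> inf a x = bot}"

definition cmpl2 :: "'a::bounded_lattice \<Rightarrow> 'a set" where
  "cmpl2 a = cmplS (cmpl a)"

definition setsup :: "'a::lattice set \<Rightarrow> 'a set \<Rightarrow> 'a set" where
  "setsup A B = {sup x y | x y. x \<in> A \<and> y \<in> B}"

definition le1 :: "'a::order set \<Rightarrow> 'a set \<Rightarrow> bool" where
  "le1 A B \<longleftrightarrow> (\<forall>x\<in>A. \<exists>y\<in>B. x \<le> y)"

definition le2 :: "'a::order set \<Rightarrow> 'a set \<Rightarrow> bool" where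
  "le2 A B \<longleftrightarrow> (\<forall>y\<in>B. \<exists>x\<in>A. x \<le> y)"

definition arr :: "'a::bounded_lattice \<Rightarrow> 'a \<Rightarrow> 'a set" where
  "arr a b = setsup (cmpl a) {inf a b}"

end

theory Submission
  imports Defs
begin

text \<open>The implication a \<rightarrow> b is the image of a^+ under x \<mapsto> x \<squnion> (a \<sqinter> b). Hence, as soon as a has a
  complement, a \<rightarrow> b = {1} says exactly that every complement x of a satisfies x \<squnion> (a \<sqinter> b) = 1.
  Since a \<sqinter> b \<le> a meets every complement of a in 0, this is the statement a \<sqinter> b \<in> a^++,
  and parts (ii), (vi) and (vii) follow from this characterisation; the remaining parts are
  direct computations with the image.\<close>

lemma arr_eq_image: "arr a b = (\<lambda>x. sup x (inf a b)) ` cmpl a"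
  unfolding arr_def setsup_def by auto

lemma arr_bot: "arr a bot = cmpl a"
  by (simp add: arr_eq_image)

lemma cmpl_top: "cmpl (top::'a::bounded_lattice) = {bot}"
  unfolding cmpl_def by auto

lemma arr_top: "arr top a = {a}"
  by (simp add: arr_eq_image cmpl_top)

lemma arr_eq_cmpl: "b \<in> cmpl a \<Longrightarrow> arr a b = cmpl a"
  by (simp add: arr_eq_image cmpl_def)

lemma arr_eq_top_iff_sup:
  assumes "cmpl a \<noteq> {}"
  shows "arr a b = {top} \<longleftrightarrow> (\<forall>x\<in>cmpl a. sup x (inf a b) = top)"
  using assms by (auto simp: arr_eq_image)

lemma inf_in_cmpl2_iff_sup:
  fixes a b :: "'a::bounded_lattice"
  shows "inf a b \<in> cmpl2 a \<longleftrightarrow> (\<forall>x\<in>cmpl a. sup x (inf a b) = top)"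
proof -
  have "inf x (inf a b) = bot" if "x \<in> cmpl a" for x
  proof -
    have "inf x (inf a b) \<le> inf a x" by (simp add: le_infI1 le_infI2)
    with that show ?thesis by (simp add: cmpl_def bot_unique)
  qed
  then show ?thesis
    unfolding cmpl2_def cmplS_def by (auto simp: sup_commute inf_commute)
qed

lemma arr_eq_top_iff:
  assumes "cmpl a \<noteq> {}"
  shows "arr a b = {top} \<longleftrightarrow> inf a b \<in> cmpl2 a"
  using assms by (simp add: arr_eq_top_iff_sup inf_in_cmpl2_iff_sup)

lemma arr_eq_top_if_le:
  assumes "cmpl a \<noteq> {}" and "a \<le> b"
  shows "arr a b = {top}"
  using assms by (auto simp: arr_eq_top_iff_sup cmpl_def inf_absorb1 sup_commute)

lemma sup_inf_mono_right: "(b::'a::lattice) \<le> c \<Longrightarrow> sup x (inf a b) \<le> sup x (inf a c)"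
  by (meson inf_mono order_refl sup_mono)

lemma le1_arr_mono: "b \<le> c \<Longrightarrow> le1 (arr a b) (arr a c)"
  unfolding le1_def arr_eq_image using sup_inf_mono_right by blast

lemma le2_arr_mono: "b \<le> c \<Longrightarrow> le2 (arr a b) (arr a c)"
  unfolding le2_def arr_eq_image using sup_inf_mono_right by blast

lemma arr_inf_eq_top:
  assumes "cmpl a \<noteq> {}"
    and "arr a b = {top}" and "arr a c = {top}"
    and closed: "\<forall>x\<in>cmpl2 a. \<forall>y\<in>cmpl2 a. inf x y \<in> cmpl2 a"
  shows "arr a (inf b c) = {top}"
proof -
  have "inf a b \<in> cmpl2 a" and "inf a c \<in> cmpl2 a"
    using assms arr_eq_top_iff by blast+
  with closed have "inf (inf a b) (inf a c) \<in> cmpl2 a" by blast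
  moreover have "inf (inf a b) (inf a c) = inf a (inf b c)" by (simp add: inf_aci)
  ultimately show ?thesis using assms(1) by (simp add: arr_eq_top_iff)
qed

lemma arr_eq_top_swap:
  assumes "cmpl a \<noteq> {}" and "cmpl b \<noteq> {}"
    and "cmpl2 a \<subseteq> cmpl2 b" and "arr a b = {top}"
  shows "arr b a = {top}"
proof -
  have "inf a b \<in> cmpl2 b" using assms arr_eq_top_iff by blast
  then show ?thesis using assms(2) by (simp add: arr_eq_top_iff inf_commute)
qed

theorem theorem3:
  fixes a b c :: "'a::bounded_lattice"
  assumes complemented: "\<And>x::'a. cmpl x \<noteq> {}"
    and nontriv: "(bot::'a) \<noteq> top"
  shows "(arr a bot = cmpl a \<and> arr top a = {a})
    \<and> (a \<le> b \<longrightarrow> arr a b = {top})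
    \<and> (arr a b = {top} \<longleftrightarrow> inf a b \<in> cmpl2 a)
    \<and> (b \<in> cmpl a \<longrightarrow> arr a b = cmpl a)
    \<and> (b \<le> c \<longrightarrow> le1 (arr a b) (arr a c) \<and> le2 (arr a b) (arr a c))
    \<and> (arr a b = {top} \<and> arr a c = {top} \<and>
          (\<forall>x\<in>cmpl2 a. \<forall>y\<in>cmpl2 a. inf x y \<in> cmpl2 a)
         \<longrightarrow> arr a (inf b c) = {top})
    \<and> (cmpl2 a \<subseteq> cmpl2 b \<and> arr a b = {top} \<longrightarrow> arr b a = {top})"
  using complemented
  by (simp add: arr_bot arr_top arr_eq_cmpl arr_eq_top_if_le arr_eq_top_iff
      le1_arr_mono le2_arr_mono arr_inf_eq_top arr_eq_top_swap)

end
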